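(* Let $S$ be a non-empty finite set of strings and run the algorithm Greedy-R on $S$. After the initial call to Make-Reverse-Factor-Free, the current set $S$ remains reverse-factor-free after each iteration of the while loop.
   Context: For strings $x,y$, $\mathit{ov}(x,y)$ is the length of the longest suffix of $x$ that is also a prefix of $y$; $\mathrm{pref}(x,y)$ is $x$ with its suffix of length $\mathit{ov}(x,y)$ removed, and $x\otimes y=\mathrm{pref}(x,y)\,y$. $x^R$ denotes the reversal of $x$. For a set $X$ of strings, $\widetilde{X}=X\cup\{x^R:x\in X\}$. A set $X$ is reverse-factor-free if there are no distinct $x,y\in X$ such that $x$ is a factor of $y$ or of $y^R$. The procedure Make-Reverse-Factor-Free$(X)$ repeatedly removes from the current set a string $x$ for which some other string $y\neq x$ of the current set has $x$ as a factor of $y$ or of $y^R$, until no such string remains. Algorithm Greedy-R$(S)$: first set $S:=$ Make-Reverse-Factor-Free$(S)$. Then, while $|S|>1$: among all pairs $(u,v)$ with $u,v\in\widetilde{S}$ and $u\notin\{v,v^R\}$, choose one with maximal $\mathit{ov}(u,v)$ (ties broken arbitrarily); set $S:=S\cup\{u\otimes v\}$ and then remove from $S$ all of $u,v,u^R,v^R$ that belong to $S$. Return the only element of $S$. *)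

theory Defs
  imports Main
begin

definition is_factor :: "'a list \<Rightarrow> 'a list \<Rightarrow> bool" where
  "is_factor x y \<longleftrightarrow> (\<exists>p s. y = p @ x @ s)"

definition ov :: "'a list \<Rightarrow> 'a list \<Rightarrow> nat" where
  "ov x y = (GREATEST k. k \<le> length x \<and> k \<le> length y \<and>
                         drop (length x - k) x = take k y)"

definition pref :: "'a list \<Rightarrow> 'a list \<Rightarrow> 'a list" where
  "pref x y = take (length x - ov x y) x"

definition merge :: "'a list \<Rightarrow> 'a list \<Rightarrow> 'a list" where
  "merge x y = pref x y @ y"

definition tilde :: "'a list set \<Rightarrow> 'a list set" where
  "tilde X = X \<union> rev ` X"

definition reverse_factor_free :: "'a list set \<Rightarrow> bool" where
  "reverse_factor_free X \<longleftrightarrow>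
     \<not> (\<exists>x\<in>X. \<exists>y\<in>X. x \<noteq> y \<and> (is_factor x y \<or> is_factor x (rev y)))"

definition mrff_step :: "'a list set \<Rightarrow> 'a list set \<Rightarrow> bool" where
  "mrff_step S S' \<longleftrightarrow>
     (\<exists>x\<in>S. \<exists>y\<in>S. y \<noteq> x \<and> (is_factor x y \<or> is_factor x (rev y)) \<and> S' = S - {x})"

text \<open>T is a possible output of Make-Reverse-Factor-Free on S (any removal order).\<close>
definition mrff_result :: "'a list set \<Rightarrow> 'a list set \<Rightarrow> bool" where
  "mrff_result S T \<longleftrightarrow> mrff_step\<^sup>*\<^sup>* S T \<and> \<not> (\<exists>T'. mrff_step T T')"

definition admissible_pair :: "'a list set \<Rightarrow> 'a list \<Rightarrow> 'a list \<Rightarrow> bool" where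
  "admissible_pair S u v \<longleftrightarrow> u \<in> tilde S \<and> v \<in> tilde S \<and> u \<noteq> v \<and> u \<noteq> rev v"

text \<open>One iteration of the while loop of Greedy-R (ties broken arbitrarily).\<close>
definition greedy_step :: "'a list set \<Rightarrow> 'a list set \<Rightarrow> bool" where
  "greedy_step S S' \<longleftrightarrow> card S > 1 \<and>
     (\<exists>u v. admissible_pair S u v \<and>
        (\<forall>u' v'. admissible_pair S u' v' \<longrightarrow> ov u' v' \<le> ov u v) \<and>
        S' = insert (merge u v) S - {u, v, rev u, rev v})"

end

theory Submission
  imports Defs
begin

text \<open>Merging \<open>u\<close> and \<open>v\<close> creates no new factor relation: a factor of \<open>u \<otimes> v\<close> that is a
  factor of neither \<open>u\<close> nor \<open>v\<close> must start inside \<open>u\<close>, before \<open>v\<close> begins, and end after \<open>u\<close>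
  does, so \<open>u\<close> overlaps with it by more than with \<open>v\<close>. For a greedy choice of \<open>(u, v)\<close> that
  contradicts maximality of \<open>ov u v\<close>. Every other pair of the new set is either a pair of the
  old, reverse-factor-free set, or contains \<open>u \<otimes> v\<close> as the larger string, in which case
  \<open>u\<close> itself would be a factor of an old string.\<close>

lemma ov_overlap:
  "ov x y \<le> length x \<and> ov x y \<le> length y \<and> drop (length x - ov x y) x = take (ov x y) y"
proof -
  let ?P = "\<lambda>k. k \<le> length x \<and> k \<le> length y \<and> drop (length x - k) x = take k y"
  have "?P (Greatest ?P)" by (rule GreatestI_nat[where k=0 and b="length x"]) auto
  thus ?thesis unfolding ov_def .
qed

lemma le_ov:
  "\<lbrakk>k \<le> length x; k \<le> length y; drop (length x - k) x = take k y\<rbrakk> \<Longrightarrow> k \<le> ov x y"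
  unfolding ov_def by (rule Greatest_le_nat[where b="length x"]) auto

lemma merge_eq_append_drop: "merge u v = u @ drop (ov u v) v"
proof -
  have overlap: "drop (length u - ov u v) u = take (ov u v) v" using ov_overlap by blast
  have "merge u v = take (length u - ov u v) u @ take (ov u v) v @ drop (ov u v) v"
    by (simp add: merge_def pref_def)
  also have "\<dots> = u @ drop (ov u v) v" by (simp flip: overlap)
  finally show ?thesis .
qed

lemma is_factor_merge_left: "is_factor u (merge u v)"
  unfolding merge_eq_append_drop is_factor_def by blast

lemma is_factor_rev_rev [simp]: "is_factor (rev a) (rev b) \<longleftrightarrow> is_factor a b"
proof -
  have "is_factor (rev a) (rev b)" if "is_factor a b" for a b :: "'a list"
  proof -
    from that obtain p s where "b = p @ a @ s" unfolding is_factor_def by blast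
    hence "rev b = rev s @ rev a @ rev p" by simp
    thus ?thesis unfolding is_factor_def by blast
  qed
  from this[of a b] this[of "rev a" "rev b"] show ?thesis by auto
qed

lemma is_factor_rev_left: "is_factor (rev a) b \<longleftrightarrow> is_factor a (rev b)"
  using is_factor_rev_rev[of a "rev b"] by simp

lemma is_factor_trans: "\<lbrakk>is_factor a b; is_factor b c\<rbrakk> \<Longrightarrow> is_factor a c"
proof -
  assume "is_factor a b" "is_factor b c"
  then obtain p s q t where "b = p @ a @ s" "c = q @ b @ t" unfolding is_factor_def by blast
  hence "c = (q @ p) @ a @ (s @ t)" by simp
  thus ?thesis unfolding is_factor_def by blast
qed

lemma ov_less_if_factor_of_merge:
  assumes w: "merge u v = p @ x @ s"
    and not_u: "\<not> is_factor x u" and not_v: "\<not> is_factor x v"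
  shows "ov u v < ov u x"
proof -
  define n where "n = length u - ov u v"
  have ov_le: "ov u v \<le> length u" using ov_overlap by blast
  have starts_before_v: "length p < n"
  proof (rule ccontr)
    assume "\<not> length p < n"
    moreover have "drop n (merge u v) = v"
      using ov_le by (simp add: merge_def pref_def n_def)
    ultimately have "v = drop n p @ x @ s" using w by simp
    thus False using not_v unfolding is_factor_def by blast
  qed
  have ends_after_u: "length u < length p + length x"
  proof (rule ccontr)
    assume within_u: "\<not> ?thesis"
    have "u = take (length u) (merge u v)" by (simp add: merge_eq_append_drop)
    also have "\<dots> = take (length u) (p @ x @ s)" using w by simp
    also have "\<dots> = p @ x @ take (length u - length p - length x) s"
      using within_u by simp
    finally show False using not_u unfolding is_factor_def by blast
  qed
  define k where "k = length u - length p"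
  have "drop (length p) u = drop (length p) (take (length u) (merge u v))"
    by (simp add: merge_eq_append_drop)
  also have "\<dots> = take k (drop (length p) (merge u v))" by (simp add: drop_take k_def)
  also have "\<dots> = take k x" using w ends_after_u k_def by simp
  finally have "drop (length u - k) u = take k x"
    using starts_before_v n_def k_def by simp
  hence "k \<le> ov u x" by (intro le_ov) (use ends_after_u k_def in auto)
  moreover have "ov u v < k" using starts_before_v n_def k_def ov_le by simp
  ultimately show ?thesis by simp
qed

lemma reverse_factor_free_tilde:
  assumes "reverse_factor_free S" and "a \<in> tilde S" and "b \<in> tilde S"
    and "b \<noteq> a" and "b \<noteq> rev a"
  shows "\<not> is_factor a b"
proof -
  obtain s t where st: "s \<in> S" "t \<in> S" "a = s \<or> a = rev s" "b = t \<or> b = rev t"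
    using assms(2,3) unfolding tilde_def by blast
  have "s \<noteq> t" using st assms(4,5) by auto
  hence "\<not> is_factor s t" "\<not> is_factor s (rev t)"
    using assms(1) st unfolding reverse_factor_free_def by blast+
  thus ?thesis using st by (auto simp: is_factor_rev_left)
qed

lemma mrff_result_reverse_factor_free:
  assumes "mrff_result S T" shows "reverse_factor_free T"
proof (rule ccontr)
  assume "\<not> reverse_factor_free T"
  then obtain x y where "x \<in> T" "y \<in> T" "y \<noteq> x" "is_factor x y \<or> is_factor x (rev y)"
    unfolding reverse_factor_free_def by blast
  hence "mrff_step T (T - {x})" unfolding mrff_step_def by auto
  with assms show False unfolding mrff_result_def by blast
qed

lemma greedy_step_reverse_factor_free:
  assumes rff: "reverse_factor_free S" and "greedy_step S S'"
  shows "reverse_factor_free S'"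
proof -
  obtain u v where adm: "admissible_pair S u v"
    and max: "\<And>u' v'. admissible_pair S u' v' \<Longrightarrow> ov u' v' \<le> ov u v"
    and S': "S' = insert (merge u v) S - {u, v, rev u, rev v}"
    using assms(2) unfolding greedy_step_def by blast
  define w where "w = merge u v"
  have u: "u \<in> tilde S" and v: "v \<in> tilde S"
    using adm unfolding admissible_pair_def by auto
  have not_into_w: "\<not> is_factor z w"
    if z: "z \<in> tilde S" "z \<notin> {u, rev u, v, rev v}" for z
  proof
    assume "is_factor z w"
    then obtain p s where "merge u v = p @ z @ s" unfolding is_factor_def w_def by blast
    moreover have "u \<noteq> rev z" "v \<noteq> rev z" using z(2) by auto
    hence "\<not> is_factor z u" "\<not> is_factor z v"
      using reverse_factor_free_tilde[OF rff z(1)] u v z(2) by auto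
    ultimately have "ov u v < ov u z" by (rule ov_less_if_factor_of_merge)
    moreover have "admissible_pair S u z"
      using u z unfolding admissible_pair_def by auto
    ultimately show False using max by fastforce
  qed
  have w_not_into: "\<not> is_factor w y" if y: "y \<in> tilde S" "y \<notin> {u, rev u}" for y
    using is_factor_trans[OF is_factor_merge_left[of u v]] reverse_factor_free_tilde[OF rff u y(1)]
      y(2) unfolding w_def by auto
  show ?thesis unfolding reverse_factor_free_def
  proof (intro notI, elim bexE conjE)
    fix x y assume x: "x \<in> S'" and y: "y \<in> S'" and "x \<noteq> y"
      and f: "is_factor x y \<or> is_factor x (rev y)"
    have old: "z \<in> S" "z \<in> tilde S" "rev z \<in> tilde S" "z \<notin> {u, rev u, v, rev v}"
      "rev z \<notin> {u, rev u, v, rev v}" if "z \<in> S'" "z \<noteq> w" for z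
      using that S' unfolding w_def tilde_def by auto
    consider "x \<noteq> w" "y \<noteq> w" | "x = w" "y \<noteq> w" | "y = w" "x \<noteq> w"
      using \<open>x \<noteq> y\<close> by blast
    thus False
    proof cases
      case 1
      with old(1) x y \<open>x \<noteq> y\<close> f rff show False unfolding reverse_factor_free_def by blast
    next
      case 2
      with f have "is_factor w y \<or> is_factor w (rev y)" by simp
      with old(2-5)[OF y \<open>y \<noteq> w\<close>] w_not_into show False by auto
    next
      case 3
      with f have "is_factor x w \<or> is_factor (rev x) w" by (simp add: is_factor_rev_left)
      with old(2-5)[OF x \<open>x \<noteq> w\<close>] not_into_w show False by blast
    qed
  qed
qed

text \<open>The finiteness and non-emptiness of \<open>S0\<close> are needed for Greedy-R to terminate, not for
  the invariant.\<close>

theorem lemma1: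
  fixes S0 S1 S :: "'a list set"
  assumes "finite S0" and "S0 \<noteq> {}"
    and "mrff_result S0 S1"
    and "greedy_step\<^sup>*\<^sup>* S1 S"
  shows "reverse_factor_free S"
  using assms(4) mrff_result_reverse_factor_free[OF assms(3)]
  by (induction rule: rtranclp_induct) (auto intro: greedy_step_reverse_factor_free)

end
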